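(* Assume hypotheses (A) and (B) and that $p_{ij}=p<1/(d-1)$ for all $i\ne j$. Let $q=p/(1-(d-2)p)$, $m=\min_{1\le i\le d}(\sqrt{\mu_i}-\sqrt{\nu_i})^2$, and for $i=1,\dots,d$ $$a_i=\frac{\mu_i-\nu_i-m-\sqrt{(\mu_i+\nu_i-m)^2-4\nu_i\mu_i}}{2\nu_i},\qquad b_i=\frac{\mu_i-\nu_i-m+\sqrt{(\mu_i+\nu_i-m)^2-4\nu_i\mu_i}}{2\nu_i}$$ (so that $\{t\in\mathbb{R}_+:t(\frac{\mu_i}{1+t}-\nu_i)\ge m\}=[a_i,b_i]$ with $0<a_i\le b_i$), $\widehat a=\max_ia_i$ and $\widehat\gamma_i=\min\{b_i,\widehat a\}$. For $\gamma$ with all $\gamma_j>0$ let $$\Sigma(\gamma_1,\dots,\gamma_d)=\sum_{j=1}^d\frac{\max_{1\le i\le d}\log(1+q\gamma_i)-\log(1+q\gamma_j)}{\log(1+\gamma_j)-\log(1+q\gamma_j)}.$$ Then $$\sup_{\gamma\in\Gamma}\min_{1\le i\le d}\gamma_i\Bigl(\frac{\mu_i}{1+\gamma_i}-\nu_i\Bigr)=\min_{1\le i\le d}\bigl(\sqrt{\mu_i}-\sqrt{\nu_i}\bigr)^2$$ holds if and only if $\Sigma(\widehat\gamma_1,\dots,\widehat\gamma_d)\le1$.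
   Context: Jackson network with $d$ queues: arrival rates $\lambda_i\ge0$, service rates $\mu_i>0$, routing matrix $P=(p_{ij})_{i,j=1}^d$ nonnegative with $p_{ii}=0$, $\sum_jp_{ij}\le1$, $p_{i0}=1-\sum_jp_{ij}$. Hypothesis (A): the jump-rate kernel on $\mathbb{Z}^d$ (jumps $+\epsilon^i$ at rate $\lambda_i$, $-\epsilon^i$ at rate $\mu_ip_{i0}$, $\epsilon^j-\epsilon^i$ at rate $\mu_ip_{ij}$) is irreducible (equivalently spectral radius of $P$ $<1$ and for every $i$ some $\lambda_jp^{(n)}_{ji}>0$); then the traffic equations $\nu_j=\lambda_j+\sum_i\nu_ip_{ij}$ have a unique solution with $\nu_i>0$. Hypothesis (B): $\nu_i<\mu_i$ for all $i$. $Q_{ij}$: probability that the chain on $\{0,\dots,d\}$ with transitions $p_{ij}$ ($0$ absorbing) started at $i$ ever visits $j$ (time $0$ included). For $\gamma\in\mathbb{R}_+^d$, $\overrightarrow{\gamma_i}$ has components $\gamma_i^j=\log(1+Q_{ji}\gamma_i)$; $\Gamma$ is the set of $\gamma\in\mathbb{R}_+^d$ such that for every $i$ and nonzero $v\in\mathbb{R}_+^d$ with $v^i=0$, $\overrightarrow{\gamma_i}\cdot v<\max_j\overrightarrow{\gamma_j}\cdot v$. *)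

theory Defs
  imports Complex_Main
begin

text \<open>Queues are indexed by 1..d; vectors in R^d / Z^d are functions on nat,
  extended by zero outside {1..d}.\<close>

definition unitv :: "nat \<Rightarrow> nat \<Rightarrow> int" where
  "unitv i = (\<lambda>k. if k = i then 1 else 0)"

definition lattice :: "nat \<Rightarrow> (nat \<Rightarrow> int) set" where
  "lattice d = {x. \<forall>k. k \<notin> {1..d} \<longrightarrow> x k = 0}"

text \<open>Jumps of positive rate of the Jackson kernel:
  +e_i at rate lam_i, -e_i at rate mu_i p_i0, e_j - e_i at rate mu_i p_ij.\<close>
definition jumps :: "nat \<Rightarrow> (nat \<Rightarrow> real) \<Rightarrow> (nat \<Rightarrow> real) \<Rightarrow> (nat \<Rightarrow> nat \<Rightarrow> real)
    \<Rightarrow> (nat \<Rightarrow> int) set" where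
  "jumps d lam mu P =
     {unitv i | i. i \<in> {1..d} \<and> lam i > 0}
   \<union> {(\<lambda>k. - unitv i k) | i. i \<in> {1..d} \<and> mu i * (1 - (\<Sum>j=1..d. P i j)) > 0}
   \<union> {(\<lambda>k. unitv j k - unitv i k) | i j. i \<in> {1..d} \<and> j \<in> {1..d} \<and> mu i * P i j > 0}"

definition kernel_step :: "nat \<Rightarrow> (nat \<Rightarrow> real) \<Rightarrow> (nat \<Rightarrow> real) \<Rightarrow> (nat \<Rightarrow> nat \<Rightarrow> real)
    \<Rightarrow> ((nat \<Rightarrow> int) \<times> (nat \<Rightarrow> int)) set" where
  "kernel_step d lam mu P =
     {(x, (\<lambda>k. x k + s k)) | x s. x \<in> lattice d \<and> s \<in> jumps d lam mu P}"

text \<open>Hypothesis (A): the jump-rate kernel on Z^d is irreducible.\<close>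
definition kernel_irreducible :: "nat \<Rightarrow> (nat \<Rightarrow> real) \<Rightarrow> (nat \<Rightarrow> real) \<Rightarrow> (nat \<Rightarrow> nat \<Rightarrow> real)
    \<Rightarrow> bool" where
  "kernel_irreducible d lam mu P \<longleftrightarrow>
     (\<forall>x\<in>lattice d. \<forall>y\<in>lattice d. (x, y) \<in> (kernel_step d lam mu P)\<^sup>*)"

text \<open>First-visit probabilities: probability that the chain with transitions P
  (state 0 absorbing) started at i visits j for the first time at time n
  (for i, j in {1..d}).\<close>
fun first_visit :: "nat \<Rightarrow> (nat \<Rightarrow> nat \<Rightarrow> real) \<Rightarrow> nat \<Rightarrow> nat \<Rightarrow> nat \<Rightarrow> real" where
  "first_visit d P 0 i j = (if i = j then 1 else 0)"
| "first_visit d P (Suc n) i j =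
     (if i = j then 0 else (\<Sum>k=1..d. P i k * first_visit d P n k j))"

text \<open>Q_ij: probability that the chain started at i ever visits j (time 0 included).\<close>
definition visit_prob :: "nat \<Rightarrow> (nat \<Rightarrow> nat \<Rightarrow> real) \<Rightarrow> nat \<Rightarrow> nat \<Rightarrow> real" where
  "visit_prob d P i j = (\<Sum>n. first_visit d P n i j)"

text \<open>Component j of the vector arrow-gamma_i: log(1 + Q_ji gamma_i).\<close>
definition gamma_vec :: "nat \<Rightarrow> (nat \<Rightarrow> nat \<Rightarrow> real) \<Rightarrow> (nat \<Rightarrow> real) \<Rightarrow> nat \<Rightarrow> nat \<Rightarrow> real" where
  "gamma_vec d P \<gamma> i j = ln (1 + visit_prob d P j i * \<gamma> i)"

definition nonneg_vec :: "nat \<Rightarrow> (nat \<Rightarrow> real) set" where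
  "nonneg_vec d = {v. (\<forall>k. k \<notin> {1..d} \<longrightarrow> v k = 0) \<and> (\<forall>k\<in>{1..d}. v k \<ge> 0)}"

definition Gamma_set :: "nat \<Rightarrow> (nat \<Rightarrow> nat \<Rightarrow> real) \<Rightarrow> (nat \<Rightarrow> real) set" where
  "Gamma_set d P = {\<gamma> \<in> nonneg_vec d.
     \<forall>i\<in>{1..d}. \<forall>v\<in>nonneg_vec d. (\<exists>k\<in>{1..d}. v k \<noteq> 0) \<and> v i = 0 \<longrightarrow>
       (\<Sum>j=1..d. gamma_vec d P \<gamma> i j * v j)
         < Max ((\<lambda>l. \<Sum>j=1..d. gamma_vec d P \<gamma> l j * v j) ` {1..d})}"

definition Sigma_fun :: "nat \<Rightarrow> real \<Rightarrow> (nat \<Rightarrow> real) \<Rightarrow> real" where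
  "Sigma_fun d q \<gamma> = (\<Sum>j=1..d.
     (Max ((\<lambda>i. ln (1 + q * \<gamma> i)) ` {1..d}) - ln (1 + q * \<gamma> j))
     / (ln (1 + \<gamma> j) - ln (1 + q * \<gamma> j)))"

definition min_gap :: "nat \<Rightarrow> (nat \<Rightarrow> real) \<Rightarrow> (nat \<Rightarrow> real) \<Rightarrow> real" where
  "min_gap d mu nu = Min ((\<lambda>i. (sqrt (mu i) - sqrt (nu i))\<^sup>2) ` {1..d})"

definition a_end :: "(nat \<Rightarrow> real) \<Rightarrow> (nat \<Rightarrow> real) \<Rightarrow> real \<Rightarrow> nat \<Rightarrow> real" where
  "a_end mu nu m i = (mu i - nu i - m - sqrt ((mu i + nu i - m)\<^sup>2 - 4 * nu i * mu i)) / (2 * nu i)"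

definition b_end :: "(nat \<Rightarrow> real) \<Rightarrow> (nat \<Rightarrow> real) \<Rightarrow> real \<Rightarrow> nat \<Rightarrow> real" where
  "b_end mu nu m i = (mu i - nu i - m + sqrt ((mu i + nu i - m)\<^sup>2 - 4 * nu i * mu i)) / (2 * nu i)"

definition gamma_hat :: "nat \<Rightarrow> (nat \<Rightarrow> real) \<Rightarrow> (nat \<Rightarrow> real) \<Rightarrow> nat \<Rightarrow> real" where
  "gamma_hat d mu nu i =
     min (b_end mu nu (min_gap d mu nu) i) (Max (a_end mu nu (min_gap d mu nu) ` {1..d}))"

end

theory Submission
  imports Defs
begin

text \<open>Under symmetric routing every off-diagonal visit probability equals \<open>q\<close>, so the linear
  forms \<open>v \<mapsto> \<gamma>\<^sub>i \<cdot> v\<close> become \<open>ln (1 + q \<gamma>\<^sub>i) \<Sum>v + (ln (1 + \<gamma>\<^sub>i) - ln (1 + q \<gamma>\<^sub>i)) v\<^sub>i\<close>, and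
  \<open>\<Gamma>\<close> is exactly the set of positive \<open>\<gamma>\<close> with \<open>\<Sigma>(\<gamma>) < 1\<close>. Each coordinate function
  \<open>t (\<mu>\<^sub>i / (1 + t) - \<nu>\<^sub>i)\<close> is bounded by \<open>(\<surd>\<mu>\<^sub>i - \<surd>\<nu>\<^sub>i)\<^sup>2\<close> and is \<open>\<ge> l\<close> exactly on an
  interval \<open>[a\<^sub>i(l), b\<^sub>i(l)]\<close>. So the supremum equals \<open>m\<close> iff for every \<open>l < m\<close> the box of these
  intervals meets \<open>{\<Sigma> < 1}\<close>. Over such a box \<open>\<Sigma>\<close> is minimised by the clipped profile
  \<open>min (b\<^sub>i(l), max\<^sub>j a\<^sub>j(l))\<close>; letting \<open>l \<rightarrow> m\<close> gives necessity of \<open>\<Sigma>(\<gamma>_hat) \<le> 1\<close>, and a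
  small upward perturbation of \<open>\<gamma>_hat\<close>, which strictly decreases \<open>\<Sigma>\<close>, gives sufficiency.\<close>

section \<open>The gain function\<close>

definition gain :: "real \<Rightarrow> real \<Rightarrow> real \<Rightarrow> real" where
  "gain x y t = t * (x / (1 + t) - y)"

lemma gain_le_sqrt_gap:
  fixes x y t :: real
  assumes "0 \<le> x" "0 \<le> y" "0 \<le> t"
  shows "gain x y t \<le> (sqrt x - sqrt y)\<^sup>2"
proof -
  define s r where "s = sqrt x" and "r = sqrt y"
  have "x = s\<^sup>2" "y = r\<^sup>2" "0 \<le> s" "0 \<le> r" using assms by (simp_all add: s_def r_def)
  with assms have "(sqrt x - sqrt y)\<^sup>2 - gain x y t = (s - r - t * r)\<^sup>2 / (1 + t)"
    by (simp add: gain_def s_def[symmetric] r_def[symmetric] divide_simps power2_eq_square)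
       (simp add: algebra_simps)
  moreover have "0 \<le> (s - r - t * r)\<^sup>2 / (1 + t)" using assms by simp
  ultimately show ?thesis by linarith
qed

text \<open>\<open>a\<close> and \<open>b\<close> are the roots of \<open>y t\<^sup>2 - (x - y - l) t + l\<close>, as in \<^const>\<open>a_end\<close> and
  \<^const>\<open>b_end\<close>.\<close>
lemma gain_ge_iff_between_roots:
  fixes x y l :: real
  assumes y: "0 < y" and yx: "y < x" and l: "0 < l" and l_le: "l \<le> (sqrt x - sqrt y)\<^sup>2"
  defines "D \<equiv> (x + y - l)\<^sup>2 - 4 * y * x"
  defines "a \<equiv> (x - y - l - sqrt D) / (2 * y)" and "b \<equiv> (x - y - l + sqrt D) / (2 * y)"
  shows "0 < a" and "a \<le> b" and "\<And>t. 0 \<le> t \<Longrightarrow> l \<le> gain x y t \<longleftrightarrow> a \<le> t \<and> t \<le> b"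
proof -
  define s r where "s = sqrt x" and "r = sqrt y"
  have x_eq: "x = s\<^sup>2" and y_eq: "y = r\<^sup>2" using assms by (simp_all add: s_def r_def)
  have "0 < r" "r < s" using y yx by (simp_all add: r_def s_def)
  have l_le': "l \<le> (s - r)\<^sup>2" using l_le by (simp add: s_def r_def)
  have "2 * s * r \<le> x + y - l"
    using l_le' unfolding x_eq y_eq by (simp add: power2_eq_square algebra_simps)
  with \<open>0 < r\<close> \<open>r < s\<close> have "(2 * s * r)\<^sup>2 \<le> (x + y - l)\<^sup>2" by (simp add: power_mono)
  hence D_nonneg: "0 \<le> D" unfolding D_def x_eq y_eq by (simp add: power2_eq_square algebra_simps)
  define w where "w = sqrt D"
  have "0 \<le> w" and w_sq: "w\<^sup>2 = D" using D_nonneg by (simp_all add: w_def)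
  have "2 * r * (s - r) \<le> x - y - l"
    using l_le' unfolding x_eq y_eq by (simp add: power2_eq_square algebra_simps)
  with \<open>0 < r\<close> \<open>r < s\<close> have pos: "0 < x - y - l" by (smt (verit) mult_pos_pos)
  have "w\<^sup>2 < (x - y - l)\<^sup>2" using y l unfolding w_sq D_def by (simp add: power2_eq_square algebra_simps)
  hence "w < x - y - l" using pos by (meson less_imp_le power2_less_imp_less)
  thus "0 < a" unfolding a_def w_def[symmetric] using y by simp
  show a_le_b: "a \<le> b" unfolding a_def b_def w_def[symmetric] using \<open>0 \<le> w\<close> y by (simp add: divide_right_mono)
  fix t :: real assume "0 \<le> t"
  have sum: "a + b = (x - y - l) / y" unfolding a_def b_def using y by (simp add: field_simps)
  have "a * b = ((x - y - l)\<^sup>2 - w\<^sup>2) / (4 * y\<^sup>2)"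
    unfolding a_def b_def w_def[symmetric] using y by (simp add: field_simps power2_eq_square)
  hence l_eq: "l = y * (a * b)" unfolding w_sq D_def using y by (simp add: field_simps power2_eq_square)
  with sum y have x_eq': "x = y + y * (a * b) + y * (a + b)" by (simp add: field_simps)
  have factor: "y * t\<^sup>2 - (x - y - l) * t + l = y * ((t - a) * (t - b))"
    by (simp add: x_eq' l_eq algebra_simps power2_eq_square)
  have "l \<le> gain x y t \<longleftrightarrow> y * t\<^sup>2 - (x - y - l) * t + l \<le> 0"
    using \<open>0 \<le> t\<close> by (simp add: gain_def field_simps power2_eq_square)
  also have "\<dots> \<longleftrightarrow> (t - a) * (t - b) \<le> 0" unfolding factor using y by (simp add: mult_le_0_iff)
  also have "\<dots> \<longleftrightarrow> a \<le> t \<and> t \<le> b" using a_le_b by (auto simp: mult_le_0_iff)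
  finally show "l \<le> gain x y t \<longleftrightarrow> a \<le> t \<and> t \<le> b" .
qed

section \<open>Symmetric routing: visit probabilities and traffic\<close>

lemma first_visit_symmetric:
  assumes P_diag: "\<forall>i\<in>{1..d}. P i i = 0"
    and P_const: "\<forall>i\<in>{1..d}. \<forall>j\<in>{1..d}. i \<noteq> j \<longrightarrow> P i j = p"
    and i: "i \<in> {1..d}"
  shows "\<forall>j\<in>{1..d}. j \<noteq> i \<longrightarrow> first_visit d P (Suc n) j i = p * ((real d - 2) * p) ^ n"
proof (induction n)
  case 0
  show ?case
  proof (intro ballI impI)
    fix j assume j: "j \<in> {1..d}" "j \<noteq> i"
    have "first_visit d P (Suc 0) j i = P j i"
      using i j(2) by (simp add: if_distrib[of "(*) _"] cong: if_cong)
    then show "first_visit d P (Suc 0) j i = p * ((real d - 2) * p) ^ 0" using P_const i j by simp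
  qed
next
  case (Suc n)
  show ?case
  proof (intro ballI impI)
    fix j assume j: "j \<in> {1..d}" "j \<noteq> i"
    have "first_visit d P (Suc (Suc n)) j i = (\<Sum>k=1..d. P j k * first_visit d P (Suc n) k i)"
      using j by simp
    also have "\<dots> = (\<Sum>k\<in>{1..d}-{i,j}. p * (p * ((real d - 2) * p) ^ n))"
      using Suc P_const P_diag j by (intro sum.mono_neutral_cong_right) auto
    also have "\<dots> = real (d - 2) * (p * (p * ((real d - 2) * p) ^ n))"
      using i j by (simp add: card_Diff_subset)
    finally show "first_visit d P (Suc (Suc n)) j i = p * ((real d - 2) * p) ^ Suc n"
      using i j by (simp add: of_nat_diff algebra_simps)
  qed
qed

lemma visit_prob_symmetric:
  assumes P_diag: "\<forall>i\<in>{1..d}. P i i = 0"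
    and P_const: "\<forall>i\<in>{1..d}. \<forall>j\<in>{1..d}. i \<noteq> j \<longrightarrow> P i j = p"
    and p: "0 \<le> p" "(real d - 2) * p < 1"
    and i: "i \<in> {1..d}" and j: "j \<in> {1..d}"
  shows "visit_prob d P j i = (if j = i then 1 else p / (1 - (real d - 2) * p))"
proof (cases "j = i")
  case True
  have "first_visit d P n i i = (if n = 0 then 1 else 0)" for n by (cases n) auto
  then show ?thesis using True sums_single[of 0 "\<lambda>_. 1::real"] by (simp add: visit_prob_def sums_iff)
next
  case False
  define r where "r = (real d - 2) * p"
  have "0 \<le> r" using i j False p by (auto simp: r_def)
  hence "(\<lambda>n. p * r ^ n) sums (p / (1 - r))"
    using sums_mult[OF geometric_sums, of r p] p by (simp add: r_def)
  moreover have "first_visit d P (Suc n) j i = p * r ^ n" for n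
    using first_visit_symmetric[OF P_diag P_const i] j False by (simp add: r_def)
  ultimately have "(\<lambda>n. first_visit d P n j i) sums (p / (1 - r))"
    using sums_Suc_iff[of "\<lambda>n. first_visit d P n j i"] False by simp
  then show ?thesis using False by (simp add: visit_prob_def r_def sums_iff)
qed

text \<open>Irreducibility forbids a linear potential that no jump increases: such a potential would
  not increase along paths, yet there is a path from \<open>0\<close> to a unit vector where it is positive.\<close>
lemma kernel_irreducible_ex_increasing_jump:
  fixes w :: "nat \<Rightarrow> int"
  assumes irr: "kernel_irreducible d lam mu P" and j: "j \<in> {1..d}" and "0 < w j"
  shows "\<exists>s\<in>jumps d lam mu P. 0 < (\<Sum>k=1..d. w k * s k)"
proof (rule ccontr)
  assume no_jump: "\<not> ?thesis"
  define \<phi> where "\<phi> x = (\<Sum>k=1..d. w k * x k)" for x :: "nat \<Rightarrow> int"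
  have "\<phi> y \<le> \<phi> x" if "(x, y) \<in> (kernel_step d lam mu P)\<^sup>*" for x y
    using that
  proof (induction rule: rtrancl_induct)
    case (step y z)
    then obtain s where "s \<in> jumps d lam mu P" "z = (\<lambda>k. y k + s k)"
      by (auto simp: kernel_step_def)
    with no_jump step.IH show ?case by (force simp: \<phi>_def algebra_simps sum.distrib)
  qed simp
  moreover have "(\<lambda>_. 0) \<in> lattice d" "unitv j \<in> lattice d" using j by (auto simp: lattice_def unitv_def)
  ultimately have "\<phi> (unitv j) \<le> \<phi> (\<lambda>_. 0)" using irr unfolding kernel_irreducible_def by blast
  moreover have "\<phi> (unitv j) = w j" using j by (simp add: \<phi>_def unitv_def if_distrib[of "(*) _"] cong: if_cong)
  ultimately show False using \<open>0 < w j\<close> by (simp add: \<phi>_def)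
qed

lemma kernel_irreducible_ex_arrival:
  assumes "kernel_irreducible d lam mu P" and "j \<in> {1..d}"
  shows "\<exists>k\<in>{1..d}. 0 < lam k"
proof -
  obtain s where s: "s \<in> jumps d lam mu P" "0 < (\<Sum>k=1..d. s k)"
    using kernel_irreducible_ex_increasing_jump[OF assms, of "\<lambda>_. 1"] by auto
  have "(\<Sum>k=1..d. unitv i k) = 1" if "i \<in> {1..d}" for i using that by (simp add: unitv_def)
  with s show ?thesis by (auto simp: jumps_def sum_subtractf sum_negf)
qed

lemma kernel_irreducible_arrival_if_no_routing:
  assumes "kernel_irreducible d lam mu P" and j: "j \<in> {1..d}"
    and no_routing: "\<forall>i\<in>{1..d}. \<forall>k\<in>{1..d}. P i k = 0"
  shows "0 < lam j"
proof -
  have "(\<Sum>k=1..d. unitv j k * s k) = s j" for s :: "nat \<Rightarrow> int"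
    using j by (simp add: unitv_def if_distrib[of "\<lambda>x. x * _"] cong: if_cong)
  then obtain s where "s \<in> jumps d lam mu P" "0 < s j"
    using kernel_irreducible_ex_increasing_jump[OF assms(1,2), of "unitv j"] by (auto simp: unitv_def)
  with no_routing show ?thesis by (auto simp: jumps_def unitv_def split: if_splits)
qed

lemma traffic_solution_pos:
  assumes lam_nonneg: "\<forall>i\<in>{1..d}. 0 \<le> lam i"
    and P_diag: "\<forall>i\<in>{1..d}. P i i = 0"
    and P_const: "\<forall>i\<in>{1..d}. \<forall>j\<in>{1..d}. i \<noteq> j \<longrightarrow> P i j = p"
    and p: "0 \<le> p" "(real d - 1) * p < 1"
    and irr: "kernel_irreducible d lam mu P"
    and traffic: "\<forall>j\<in>{1..d}. nu j = lam j + (\<Sum>i=1..d. nu i * P i j)"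
    and j: "j \<in> {1..d}"
  shows "0 < nu j"
proof -
  define T where "T = (\<Sum>i=1..d. nu i)"
  have nu_eq: "nu k = lam k + p * (T - nu k)" if k: "k \<in> {1..d}" for k
  proof -
    have "(\<Sum>i=1..d. nu i * P i k) = (\<Sum>i=1..d. p * nu i - (if i = k then p * nu i else 0))"
      using P_diag P_const k by (intro sum.cong) auto
    also have "\<dots> = p * T - p * nu k" using k by (simp add: sum_subtractf sum_distrib_left T_def)
    finally show ?thesis using traffic k by (simp add: right_diff_distrib)
  qed
  show ?thesis
  proof (cases "p = 0")
    case True
    with P_diag P_const have "\<forall>i\<in>{1..d}. \<forall>k\<in>{1..d}. P i k = 0" by metis
    with kernel_irreducible_arrival_if_no_routing[OF irr j] nu_eq[OF j] True show ?thesis by simp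
  next
    case False
    have "T = (\<Sum>k=1..d. lam k + p * (T - nu k))" by (subst (1) T_def) (rule sum.cong[OF refl nu_eq])
    also have "\<dots> = (\<Sum>k=1..d. lam k) + p * (real d * T - T)"
      by (simp add: sum.distrib sum_subtractf sum_distrib_left[symmetric] T_def)
    finally have "T * (1 - (real d - 1) * p) = (\<Sum>k=1..d. lam k)" by (simp add: algebra_simps)
    moreover obtain k where "k \<in> {1..d}" "0 < lam k" using kernel_irreducible_ex_arrival[OF irr j] by blast
    hence "0 < (\<Sum>k=1..d. lam k)" using lam_nonneg by (intro sum_pos2) auto
    ultimately have "0 < T" using p by (smt (verit) mult_nonpos_nonneg)
    hence "0 < lam j + p * T" using lam_nonneg j p False by (simp add: add_nonneg_pos)
    moreover have "nu j * (1 + p) = lam j + p * T" using nu_eq[OF j] by (simp add: algebra_simps)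
    ultimately show ?thesis using p by (smt (verit) mult_nonpos_nonneg)
  qed
qed

section \<open>The set \<open>\<Gamma>\<close>\<close>

text \<open>The defining condition of \<^const>\<open>Gamma_set\<close>, for linear forms
  \<open>v \<mapsto> B i * (\<Sum>v) + c i * v i\<close>; this is the shape of \<open>v \<mapsto> \<gamma>\<^sub>i \<cdot> v\<close> under symmetric routing.\<close>
definition Gamma_condition :: "nat \<Rightarrow> (nat \<Rightarrow> real) \<Rightarrow> (nat \<Rightarrow> real) \<Rightarrow> bool" where
  "Gamma_condition d B c \<longleftrightarrow>
     (\<forall>i\<in>{1..d}. \<forall>v\<in>nonneg_vec d. (\<exists>k\<in>{1..d}. v k \<noteq> 0) \<and> v i = 0 \<longrightarrow>
       B i * sum v {1..d} + c i * v i < Max ((\<lambda>l. B l * sum v {1..d} + c l * v l) ` {1..d}))"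

lemma not_Gamma_condition_if_degenerate:
  assumes "2 \<le> d" and j: "j \<in> {1..d}" and "c j \<le> 0" and B_min: "\<forall>l\<in>{1..d}. B j \<le> B l"
  shows "\<not> Gamma_condition d B c"
proof
  assume cond: "Gamma_condition d B c"
  define X where "X = {1..d} - {j}"
  have "(if j = 1 then 2 else 1) \<in> X" using \<open>2 \<le> d\<close> j by (auto simp: X_def)
  hence "Max (B ` X) \<in> B ` X" by (intro Max_in) (auto simp: X_def)
  then obtain i where i: "i \<in> X" "B i = Max (B ` X)" by auto
  hence B_max: "B l \<le> B i" if "l \<in> X" for l using that by (simp add: X_def)
  define v :: "nat \<Rightarrow> real" where "v k = (if k = j then 1 else 0)" for k
  have "v \<in> nonneg_vec d" "sum v {1..d} = 1" using j by (auto simp: v_def nonneg_vec_def)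
  moreover have "i \<in> {1..d}" "v i = 0" "v j \<noteq> 0" using i by (auto simp: v_def X_def)
  ultimately obtain l where l: "l \<in> {1..d}" "B i < B l + c l * v l"
    using cond j unfolding Gamma_condition_def by (fastforce simp: Max_gr_iff)
  show False
  proof (cases "l = j")
    case True
    with l(2) have "B i < B j + c j" by (simp add: v_def)
    with B_min i(1) \<open>c j \<le> 0\<close> show False by (force simp: X_def)
  next
    case False
    with l have "B i < B l" "l \<in> X" by (simp_all add: v_def X_def)
    with B_max show False by force
  qed
qed

lemma Gamma_condition_iff_sum_less_1:
  assumes "1 \<le> d" and c_pos: "\<forall>l\<in>{1..d}. 0 < c l"
  shows "Gamma_condition d B c \<longleftrightarrow> (\<Sum>l=1..d. (Max (B ` {1..d}) - B l) / c l) < 1"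
    (is "_ \<longleftrightarrow> ?S < 1")
proof -
  define M where "M = Max (B ` {1..d})"
  have B_le: "B l \<le> M" if "l \<in> {1..d}" for l using that by (simp add: M_def)
  have Max_iff: "x < Max ((\<lambda>l. B l * s + c l * v l) ` {1..d}) \<longleftrightarrow> (\<exists>l\<in>{1..d}. x < B l * s + c l * v l)"
    for x s and v :: "nat \<Rightarrow> real" using \<open>1 \<le> d\<close> by (simp add: Max_gr_iff)
  show ?thesis
  proof
    assume cond: "Gamma_condition d B c"
    show "?S < 1"
    proof (rule ccontr)
      assume "\<not> ?S < 1"
      define v where "v l = (if l \<in> {1..d} then (M - B l) / c l else 0)" for l
      have v: "v \<in> nonneg_vec d" using B_le c_pos by (auto simp: v_def nonneg_vec_def)
      have sum_v: "sum v {1..d} = ?S" by (simp add: v_def M_def)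
      have nz: "\<exists>k\<in>{1..d}. v k \<noteq> 0"
      proof (rule ccontr)
        assume "\<not> ?thesis"
        hence "sum v {1..d} = 0" by simp
        with sum_v \<open>\<not> ?S < 1\<close> show False by simp
      qed
      have "M \<in> B ` {1..d}" unfolding M_def using \<open>1 \<le> d\<close> by (intro Max_in) auto
      then obtain i where i: "i \<in> {1..d}" "B i = M" by auto
      hence "v i = 0" by (simp add: v_def)
      with cond v nz i(1) have "\<exists>l\<in>{1..d}. B i * sum v {1..d} + c i * v i < B l * sum v {1..d} + c l * v l"
        unfolding Gamma_condition_def Max_iff by blast
      then obtain l where l: "l \<in> {1..d}" "M * ?S < B l * ?S + c l * v l"
        using i(2) \<open>v i = 0\<close> sum_v by auto
      have "c l * v l = M - B l" using c_pos l(1) by (simp add: v_def less_imp_neq[symmetric])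
      moreover have "0 \<le> (M - B l) * (?S - 1)" using B_le[OF l(1)] \<open>\<not> ?S < 1\<close> by simp
      ultimately show False using l(2) by (simp add: algebra_simps)
    qed
  next
    assume "?S < 1"
    show "Gamma_condition d B c" unfolding Gamma_condition_def Max_iff
    proof (intro ballI impI)
      fix i v assume i: "i \<in> {1..d}" and v: "v \<in> nonneg_vec d" and "(\<exists>k\<in>{1..d}. v k \<noteq> 0) \<and> v i = 0"
      then obtain k where k: "k \<in> {1..d}" "v k \<noteq> 0" and "v i = 0" by blast
      define s where "s = sum v {1..d}"
      have v_nonneg: "0 \<le> v l" if "l \<in> {1..d}" for l using v that by (simp add: nonneg_vec_def)
      have "0 < s" unfolding s_def using k v_nonneg by (intro sum_pos2[of _ k]) (auto simp: less_le)
      show "\<exists>l\<in>{1..d}. B i * s + c i * v i < B l * s + c l * v l"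
      proof (rule ccontr)
        assume "\<not> ?thesis"
        hence "B l * s + c l * v l \<le> B i * s" if "l \<in> {1..d}" for l
          using that \<open>v i = 0\<close> by force
        moreover have "B i * s \<le> M * s" using B_le[OF i] \<open>0 < s\<close> by simp
        ultimately have "c l * v l \<le> (M - B l) * s" if "l \<in> {1..d}" for l
          using that by (fastforce simp: left_diff_distrib)
        hence "v l \<le> (M - B l) / c l * s" if "l \<in> {1..d}" for l
          using that c_pos by (simp add: divide_simps mult.commute)
        hence "s \<le> (\<Sum>l=1..d. (M - B l) / c l * s)" unfolding s_def by (intro sum_mono) (auto simp: s_def)
        also have "\<dots> = ?S * s" by (simp add: sum_distrib_right M_def)
        also have "\<dots> < s" using \<open>?S < 1\<close> \<open>0 < s\<close> by simp
        finally show False by simp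
      qed
    qed
  qed
qed

definition Sigma_region :: "nat \<Rightarrow> real \<Rightarrow> (nat \<Rightarrow> real) set" where
  "Sigma_region d q = {\<gamma> \<in> nonneg_vec d. (\<forall>j\<in>{1..d}. 0 < \<gamma> j) \<and> Sigma_fun d q \<gamma> < 1}"

lemma ln_one_plus_scaled_less:
  fixes q x :: real
  assumes "0 \<le> q" "q < 1" "0 < x"
  shows "ln (1 + q * x) < ln (1 + x)"
proof -
  have "q * x < x" "0 \<le> q * x" using assms by (simp_all add: mult_less_cancel_right1)
  then show ?thesis by (simp add: add_nonneg_pos)
qed

lemma Gamma_set_iff_Gamma_condition:
  assumes visit: "\<forall>i\<in>{1..d}. \<forall>j\<in>{1..d}. visit_prob d P j i = (if j = i then 1 else q)"
  shows "\<gamma> \<in> Gamma_set d P \<longleftrightarrow> \<gamma> \<in> nonneg_vec d \<and>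
           Gamma_condition d (\<lambda>i. ln (1 + q * \<gamma> i)) (\<lambda>i. ln (1 + \<gamma> i) - ln (1 + q * \<gamma> i))"
proof -
  have linear_form: "(\<Sum>j=1..d. gamma_vec d P \<gamma> i j * v j)
          = ln (1 + q * \<gamma> i) * sum v {1..d} + (ln (1 + \<gamma> i) - ln (1 + q * \<gamma> i)) * v i"
    if i: "i \<in> {1..d}" for i and v :: "nat \<Rightarrow> real"
  proof -
    have "(\<Sum>j=1..d. gamma_vec d P \<gamma> i j * v j)
          = (\<Sum>j=1..d. ln (1 + q * \<gamma> i) * v j
               + (if j = i then (ln (1 + \<gamma> i) - ln (1 + q * \<gamma> i)) * v i else 0))"
      using visit i by (intro sum.cong) (auto simp: gamma_vec_def algebra_simps)
    then show ?thesis using i by (simp add: sum.distrib sum_distrib_left)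
  qed
  have "(\<lambda>l. \<Sum>j=1..d. gamma_vec d P \<gamma> l j * v j) ` {1..d}
      = (\<lambda>l. ln (1 + q * \<gamma> l) * sum v {1..d} + (ln (1 + \<gamma> l) - ln (1 + q * \<gamma> l)) * v l) ` {1..d}"
    for v by (rule image_cong[OF refl linear_form])
  with linear_form have "(\<Sum>j=1..d. gamma_vec d P \<gamma> i j * v j)
        < Max ((\<lambda>l. \<Sum>j=1..d. gamma_vec d P \<gamma> l j * v j) ` {1..d})
      \<longleftrightarrow> ln (1 + q * \<gamma> i) * sum v {1..d} + (ln (1 + \<gamma> i) - ln (1 + q * \<gamma> i)) * v i
        < Max ((\<lambda>l. ln (1 + q * \<gamma> l) * sum v {1..d}
                      + (ln (1 + \<gamma> l) - ln (1 + q * \<gamma> l)) * v l) ` {1..d})"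
    if "i \<in> {1..d}" for i v using that by presburger
  then show ?thesis unfolding Gamma_set_def Gamma_condition_def mem_Collect_eq by blast
qed

lemma Gamma_set_eq_Sigma_region:
  assumes "2 \<le> d" and q: "0 \<le> q" "q < 1"
    and visit: "\<forall>i\<in>{1..d}. \<forall>j\<in>{1..d}. visit_prob d P j i = (if j = i then 1 else q)"
  shows "Gamma_set d P = Sigma_region d q"
proof (intro set_eqI)
  fix \<gamma> :: "nat \<Rightarrow> real"
  define B c where "B = (\<lambda>i. ln (1 + q * \<gamma> i))" and "c = (\<lambda>i. ln (1 + \<gamma> i) - ln (1 + q * \<gamma> i))"
  show "\<gamma> \<in> Gamma_set d P \<longleftrightarrow> \<gamma> \<in> Sigma_region d q"
  proof (cases "\<gamma> \<in> nonneg_vec d \<and> (\<forall>j\<in>{1..d}. 0 < \<gamma> j)")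
    case True
    hence "\<forall>l\<in>{1..d}. 0 < c l" using q ln_one_plus_scaled_less by (simp add: c_def)
    with True \<open>2 \<le> d\<close> show ?thesis
      using Gamma_set_iff_Gamma_condition[OF visit] Gamma_condition_iff_sum_less_1[of d c B]
      by (simp add: Sigma_region_def Sigma_fun_def B_def c_def)
  next
    case False
    show ?thesis
    proof (cases "\<gamma> \<in> nonneg_vec d")
      case True
      with False obtain j where j: "j \<in> {1..d}" "\<gamma> j = 0"
        by (force simp: nonneg_vec_def less_le)
      have "\<forall>l\<in>{1..d}. B j \<le> B l" using True q j by (auto simp: B_def nonneg_vec_def)
      with j \<open>2 \<le> d\<close> have "\<not> Gamma_condition d B c"
        by (intro not_Gamma_condition_if_degenerate) (auto simp: c_def)
      with False show ?thesis
        using Gamma_set_iff_Gamma_condition[OF visit] by (simp add: Sigma_region_def B_def c_def)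
    qed (simp add: Gamma_set_def Sigma_region_def)
  qed
qed

section \<open>The function \<open>\<Sigma>\<close>\<close>

lemma ln_one_plus_scaled_mono:
  fixes q x y :: real
  assumes "0 \<le> q" "0 \<le> x" "x \<le> y"
  shows "ln (1 + q * x) \<le> ln (1 + q * y)"
proof -
  have "q * x \<le> q * y" "0 \<le> q * x" using assms by (simp_all add: mult_left_mono)
  then show ?thesis by simp
qed

lemma ln_one_plus_ratio_mono:
  fixes q x y :: real
  assumes "0 \<le> q" "q < 1" "0 \<le> x" "x \<le> y"
  shows "ln (1 + x) - ln (1 + q * x) \<le> ln (1 + y) - ln (1 + q * y)"
proof -
  have pos: "0 < 1 + q * x" "0 < 1 + q * y" using assms by (simp_all add: add_pos_nonneg)
  have "(1 + y) * (1 + q * x) - (1 + x) * (1 + q * y) = (1 - q) * (y - x)" by (simp add: algebra_simps)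
  also have "\<dots> \<ge> 0" using assms by simp
  finally have "(1 + x) / (1 + q * x) \<le> (1 + y) / (1 + q * y)" using pos by (simp add: divide_simps)
  moreover have "0 < (1 + x) / (1 + q * x)" using pos assms by simp
  ultimately have "ln ((1 + x) / (1 + q * x)) \<le> ln ((1 + y) / (1 + q * y))" by simp
  then show ?thesis using pos assms by (simp add: ln_div)
qed

definition Sigma_term :: "real \<Rightarrow> real \<Rightarrow> real \<Rightarrow> real" where
  "Sigma_term q M t = (M - ln (1 + q * t)) / (ln (1 + t) - ln (1 + q * t))"

lemma Sigma_fun_eq_sum_Sigma_term:
  "Sigma_fun d q \<gamma> = (\<Sum>j=1..d. Sigma_term q (Max ((\<lambda>i. ln (1 + q * \<gamma> i)) ` {1..d})) (\<gamma> j))"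
  by (simp add: Sigma_fun_def Sigma_term_def)

lemma Sigma_fun_cong:
  assumes "\<forall>j\<in>{1..d}. g j = h j"
  shows "Sigma_fun d q g = Sigma_fun d q h"
proof -
  have "(\<lambda>i. ln (1 + q * g i)) ` {1..d} = (\<lambda>i. ln (1 + q * h i)) ` {1..d}"
    using assms by (intro image_cong) auto
  with assms show ?thesis unfolding Sigma_fun_eq_sum_Sigma_term by simp
qed

lemma Sigma_term_nonneg:
  assumes "0 \<le> q" "q < 1" "0 < t" "ln (1 + q * t) \<le> M"
  shows "0 \<le> Sigma_term q M t"
  using assms ln_one_plus_scaled_less[of q t] by (simp add: Sigma_term_def)

lemma Sigma_term_mono:
  assumes "0 \<le> q" "q < 1" "0 < t" "M \<le> M'"
  shows "Sigma_term q M t \<le> Sigma_term q M' t"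
  using assms ln_one_plus_scaled_less[of q t] by (simp add: Sigma_term_def divide_right_mono)

lemma Sigma_term_antimono:
  assumes q: "0 \<le> q" "q < 1" and "0 < s" "s \<le> t" and M: "ln (1 + q * t) \<le> M"
  shows "Sigma_term q M t \<le> Sigma_term q M s"
proof -
  have den: "0 < ln (1 + s) - ln (1 + q * s)" using q \<open>0 < s\<close> ln_one_plus_scaled_less by simp
  have "(M - ln (1 + q * t)) / (ln (1 + t) - ln (1 + q * t)) \<le> (M - ln (1 + q * t)) / (ln (1 + s) - ln (1 + q * s))"
    using M den ln_one_plus_ratio_mono[of q s t] assms by (intro divide_left_mono) auto
  also have "\<dots> \<le> (M - ln (1 + q * s)) / (ln (1 + s) - ln (1 + q * s))"
    using den ln_one_plus_scaled_mono[of q s t] assms by (intro divide_right_mono) auto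
  finally show ?thesis by (simp add: Sigma_term_def)
qed

lemma Sigma_term_strict_antimono:
  assumes q: "0 < q" "q < 1" and "0 < s" "s < t" and M: "ln (1 + q * t) \<le> M"
  shows "Sigma_term q M t < Sigma_term q M s"
proof -
  have den: "0 < ln (1 + s) - ln (1 + q * s)" using q \<open>0 < s\<close> ln_one_plus_scaled_less by simp
  have "(M - ln (1 + q * t)) / (ln (1 + t) - ln (1 + q * t)) \<le> (M - ln (1 + q * t)) / (ln (1 + s) - ln (1 + q * s))"
    using M den ln_one_plus_ratio_mono[of q s t] assms by (intro divide_left_mono) auto
  also have "\<dots> < (M - ln (1 + q * s)) / (ln (1 + s) - ln (1 + q * s))"
    using den assms by (intro divide_strict_right_mono) (auto simp: add_pos_nonneg)
  finally show ?thesis by (simp add: Sigma_term_def)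
qed

lemma Max_ln_scaled_eq:
  fixes q T :: real and g :: "nat \<Rightarrow> real"
  assumes "0 \<le> q" and g: "\<forall>j\<in>{1..d}. 0 \<le> g j \<and> g j \<le> T" and top: "i \<in> {1..d}" "g i = T"
  shows "Max ((\<lambda>j. ln (1 + q * g j)) ` {1..d}) = ln (1 + q * T)"
proof (rule Max_eqI)
  fix y assume "y \<in> (\<lambda>j. ln (1 + q * g j)) ` {1..d}"
  then obtain j where "j \<in> {1..d}" "y = ln (1 + q * g j)" by blast
  with assms show "y \<le> ln (1 + q * T)" by (simp add: ln_one_plus_scaled_mono)
next
  show "ln (1 + q * T) \<in> (\<lambda>j. ln (1 + q * g j)) ` {1..d}" using top by (metis image_eqI)
qed simp

lemma Sigma_fun_at_top:
  fixes q T :: real and g :: "nat \<Rightarrow> real"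
  assumes "0 \<le> q" and "\<forall>j\<in>{1..d}. 0 \<le> g j \<and> g j \<le> T" and "i \<in> {1..d}" "g i = T"
  shows "Sigma_fun d q g = (\<Sum>j=1..d. Sigma_term q (ln (1 + q * T)) (g j))"
  using Max_ln_scaled_eq[OF assms] by (simp add: Sigma_fun_eq_sum_Sigma_term)

text \<open>Among the profiles in the box \<open>a \<le> g \<le> b\<close>, the clipped profile \<open>min b (Max a)\<close>
  minimises \<^const>\<open>Sigma_fun\<close>: it keeps the maximum as low as possible and every other
  coordinate as high as possible.\<close>
lemma Sigma_fun_clipped_le:
  fixes q :: real and a b g :: "nat \<Rightarrow> real"
  assumes q: "0 \<le> q" "q < 1" and "1 \<le> d"
    and box: "\<forall>j\<in>{1..d}. 0 < a j \<and> a j \<le> g j \<and> g j \<le> b j"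
  shows "Sigma_fun d q (\<lambda>j. min (b j) (Max (a ` {1..d}))) \<le> Sigma_fun d q g"
proof -
  define T where "T = Max (a ` {1..d})"
  define h where "h = (\<lambda>j. min (b j) T)"
  have "T \<in> a ` {1..d}" unfolding T_def using \<open>1 \<le> d\<close> by (intro Max_in) auto
  then obtain i where i: "i \<in> {1..d}" "a i = T" by auto
  have a_le_T: "a j \<le> T" if "j \<in> {1..d}" for j using that by (simp add: T_def)
  have h: "0 < h j \<and> h j \<le> T \<and> a j \<le> h j" if "j \<in> {1..d}" for j
    using box that a_le_T[OF that] by (force simp: h_def)
  have "h i = T" using box i by (force simp: h_def)
  define Mg where "Mg = Max ((\<lambda>j. ln (1 + q * g j)) ` {1..d})"
  have "ln (1 + q * T) \<le> ln (1 + q * g i)"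
    using box i q by (intro ln_one_plus_scaled_mono) force+
  also have "\<dots> \<le> Mg" using i by (auto simp: Mg_def)
  finally have T_le_Mg: "ln (1 + q * T) \<le> Mg" .
  have "Sigma_fun d q h = (\<Sum>j=1..d. Sigma_term q (ln (1 + q * T)) (h j))"
    using h \<open>h i = T\<close> i q by (intro Sigma_fun_at_top) (auto simp: less_imp_le)
  also have "\<dots> \<le> (\<Sum>j=1..d. Sigma_term q Mg (g j))"
  proof (rule sum_mono)
    fix j assume j: "j \<in> {1..d}"
    have g_pos: "0 < g j" using box j by force
    have "ln (1 + q * g j) \<le> Mg" using j by (auto simp: Mg_def)
    show "Sigma_term q (ln (1 + q * T)) (h j) \<le> Sigma_term q Mg (g j)"
    proof (cases "g j \<le> h j")
      case True
      have "ln (1 + q * h j) \<le> ln (1 + q * T)"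
        using h[OF j] q by (intro ln_one_plus_scaled_mono) auto
      with True g_pos q have "Sigma_term q (ln (1 + q * T)) (h j) \<le> Sigma_term q (ln (1 + q * T)) (g j)"
        by (intro Sigma_term_antimono) auto
      also have "\<dots> \<le> Sigma_term q Mg (g j)" using q g_pos T_le_Mg by (intro Sigma_term_mono)
      finally show ?thesis .
    next
      case False
      hence "h j = T" using box j by (auto simp: h_def min_def split: if_splits)
      hence "Sigma_term q (ln (1 + q * T)) (h j) = 0" by (simp add: Sigma_term_def)
      with q g_pos \<open>ln (1 + q * g j) \<le> Mg\<close> show ?thesis by (simp add: Sigma_term_nonneg)
    qed
  qed
  also have "\<dots> = Sigma_fun d q g" by (simp add: Sigma_fun_eq_sum_Sigma_term Mg_def)
  finally show ?thesis by (simp add: h_def T_def)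
qed

lemma Sigma_fun_raised_le:
  fixes q T \<delta> :: real and g :: "nat \<Rightarrow> real"
  assumes q: "0 \<le> q" "q < 1" and g: "\<forall>j\<in>{1..d}. 0 < g j \<and> g j \<le> T"
    and top: "i \<in> {1..d}" "g i = T" and "0 \<le> \<delta>"
  shows "Sigma_fun d q (\<lambda>j. min (g j + \<delta>) T) \<le> Sigma_fun d q g"
    and "0 < \<delta> \<Longrightarrow> 0 < Sigma_fun d q g \<Longrightarrow> Sigma_fun d q (\<lambda>j. min (g j + \<delta>) T) < Sigma_fun d q g"
proof -
  define h where "h = (\<lambda>j. min (g j + \<delta>) T)"
  have h: "g j \<le> h j \<and> 0 < h j \<and> h j \<le> T" if "j \<in> {1..d}" for j
    using g that \<open>0 \<le> \<delta>\<close> by (force simp: h_def)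
  have Sigma_g: "Sigma_fun d q g = (\<Sum>j=1..d. Sigma_term q (ln (1 + q * T)) (g j))"
    using g top q by (intro Sigma_fun_at_top) (auto simp: less_imp_le)
  have Sigma_h: "Sigma_fun d q h = (\<Sum>j=1..d. Sigma_term q (ln (1 + q * T)) (h j))"
    using h top q \<open>0 \<le> \<delta>\<close> by (intro Sigma_fun_at_top) (auto simp: h_def less_imp_le)
  have term_le: "Sigma_term q (ln (1 + q * T)) (h j) \<le> Sigma_term q (ln (1 + q * T)) (g j)"
    if j: "j \<in> {1..d}" for j
    using g h[OF j] q j by (intro Sigma_term_antimono ln_one_plus_scaled_mono) auto
  then show "Sigma_fun d q h \<le> Sigma_fun d q g" unfolding Sigma_g Sigma_h by (rule sum_mono)
  assume "0 < \<delta>" and Sigma_pos: "0 < Sigma_fun d q g"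
  have "0 < q"
  proof (rule ccontr)
    assume "\<not> 0 < q"
    with q Sigma_g have "Sigma_fun d q g = 0" by (simp add: Sigma_term_def)
    with Sigma_pos show False by simp
  qed
  obtain j where j: "j \<in> {1..d}" "g j < T"
  proof (rule ccontr)
    assume "\<not> thesis"
    with that g have "\<forall>j\<in>{1..d}. g j = T" by force
    with Sigma_g have "Sigma_fun d q g = 0" by (simp add: Sigma_term_def)
    with Sigma_pos show False by simp
  qed
  with \<open>0 < \<delta>\<close> have "g j < h j" by (simp add: h_def)
  with g h[OF j(1)] \<open>0 < q\<close> q j
  have "Sigma_term q (ln (1 + q * T)) (h j) < Sigma_term q (ln (1 + q * T)) (g j)"
    by (intro Sigma_term_strict_antimono ln_one_plus_scaled_mono) auto
  then show "Sigma_fun d q h < Sigma_fun d q g"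
    unfolding Sigma_g Sigma_h using term_le j(1) by (intro sum_strict_mono_ex1) auto
qed

lemma tendsto_Max_image:
  fixes f :: "'a \<Rightarrow> 'b \<Rightarrow> 'c::linorder_topology"
  assumes "finite A" "A \<noteq> {}" "\<forall>i\<in>A. ((\<lambda>x. f x i) \<longlongrightarrow> g i) F"
  shows "((\<lambda>x. Max ((f x) ` A)) \<longlongrightarrow> Max (g ` A)) F"
  using assms by (induction A rule: finite_ne_induct) (auto intro!: tendsto_max)

lemma tendsto_Min_image:
  fixes f :: "'a \<Rightarrow> 'b \<Rightarrow> 'c::linorder_topology"
  assumes "finite A" "A \<noteq> {}" "\<forall>i\<in>A. ((\<lambda>x. f x i) \<longlongrightarrow> g i) F"
  shows "((\<lambda>x. Min ((f x) ` A)) \<longlongrightarrow> Min (g ` A)) F"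
  using assms by (induction A rule: finite_ne_induct) (auto intro!: tendsto_min)

lemma tendsto_Sigma_fun:
  fixes q :: real
  assumes q: "0 \<le> q" "q < 1" and "1 \<le> d"
    and lim: "\<forall>i\<in>{1..d}. ((\<lambda>x. h x i) \<longlongrightarrow> h0 i) F" and pos: "\<forall>i\<in>{1..d}. 0 < h0 i"
  shows "((\<lambda>x. Sigma_fun d q (h x)) \<longlongrightarrow> Sigma_fun d q h0) F"
proof -
  have ln_lim: "((\<lambda>x. ln (1 + c * h x i)) \<longlongrightarrow> ln (1 + c * h0 i)) F"
    if "i \<in> {1..d}" "0 \<le> c" for i and c :: real
  proof (intro tendsto_intros)
    have "0 < h0 i" using pos that(1) by blast
    with that(2) have "0 \<le> c * h0 i" by simp
    then show "1 + c * h0 i \<noteq> 0" by linarith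
  qed (use lim that in auto)
  have "((\<lambda>x. Max ((\<lambda>i. ln (1 + q * h x i)) ` {1..d})) \<longlongrightarrow> Max ((\<lambda>i. ln (1 + q * h0 i)) ` {1..d})) F"
    using \<open>1 \<le> d\<close> ln_lim q by (intro tendsto_Max_image) auto
  moreover have "ln (1 + h0 j) - ln (1 + q * h0 j) \<noteq> 0" if "j \<in> {1..d}" for j
    using ln_one_plus_scaled_less[OF q, of "h0 j"] pos that by simp
  ultimately show ?thesis
    unfolding Sigma_fun_def using ln_lim[of _ 1] ln_lim[of _ q] q
    by (intro tendsto_sum tendsto_divide tendsto_diff) auto
qed

section \<open>The supremum\<close>

lemma cSup_eq_iff_arbitrarily_close:
  fixes S :: "'a::conditionally_complete_linorder set"
  assumes "S \<noteq> {}" and upper: "\<forall>x\<in>S. x \<le> m"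
  shows "Sup S = m \<longleftrightarrow> (\<forall>l<m. \<exists>x\<in>S. l < x)"
proof
  have "bdd_above S" using upper by (auto simp: bdd_above_def)
  then show "Sup S = m \<Longrightarrow> \<forall>l<m. \<exists>x\<in>S. l < x" using less_cSup_iff[OF \<open>S \<noteq> {}\<close>] by blast
  assume close: "\<forall>l<m. \<exists>x\<in>S. l < x"
  show "Sup S = m"
  proof (rule antisym)
    show "Sup S \<le> m" using assms by (intro cSup_least) auto
    show "m \<le> Sup S"
    proof (rule ccontr)
      assume "\<not> m \<le> Sup S"
      with close obtain x where "x \<in> S" "Sup S < x" by (meson not_le)
      with \<open>bdd_above S\<close> show False by (meson cSup_upper not_le)
    qed
  qed
qed

definition min_gain :: "nat \<Rightarrow> (nat \<Rightarrow> real) \<Rightarrow> (nat \<Rightarrow> real) \<Rightarrow> (nat \<Rightarrow> real) \<Rightarrow> real" where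
  "min_gain d mu nu \<gamma> = Min ((\<lambda>i. gain (mu i) (nu i) (\<gamma> i)) ` {1..d})"

definition gamma_hat_at :: "nat \<Rightarrow> (nat \<Rightarrow> real) \<Rightarrow> (nat \<Rightarrow> real) \<Rightarrow> real \<Rightarrow> nat \<Rightarrow> real" where
  "gamma_hat_at d mu nu l i = min (b_end mu nu l i) (Max (a_end mu nu l ` {1..d}))"

lemma gamma_hat_eq_gamma_hat_at: "gamma_hat d mu nu = gamma_hat_at d mu nu (min_gap d mu nu)"
  by (simp add: fun_eq_iff gamma_hat_def gamma_hat_at_def)

context
  fixes d :: nat and mu nu :: "nat \<Rightarrow> real"
  assumes d: "1 \<le> d" and nu_pos: "\<And>i. i \<in> {1..d} \<Longrightarrow> 0 < nu i"
    and nu_less_mu: "\<And>i. i \<in> {1..d} \<Longrightarrow> nu i < mu i"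
begin

lemma min_gap_pos: "0 < min_gap d mu nu"
  using d nu_pos nu_less_mu by (simp add: min_gap_def power2_eq_square)

lemma min_gain_le_min_gap:
  assumes "\<gamma> \<in> nonneg_vec d"
  shows "min_gain d mu nu \<gamma> \<le> min_gap d mu nu"
proof -
  have "min_gap d mu nu \<in> (\<lambda>i. (sqrt (mu i) - sqrt (nu i))\<^sup>2) ` {1..d}"
    unfolding min_gap_def using d by (intro Min_in) auto
  then obtain i where i: "i \<in> {1..d}" "min_gap d mu nu = (sqrt (mu i) - sqrt (nu i))\<^sup>2" by auto
  have "min_gain d mu nu \<gamma> \<le> gain (mu i) (nu i) (\<gamma> i)" using i by (simp add: min_gain_def)
  also have "\<dots> \<le> (sqrt (mu i) - sqrt (nu i))\<^sup>2"
    using assms i nu_pos[OF i(1)] nu_less_mu[OF i(1)] by (intro gain_le_sqrt_gap) (auto simp: nonneg_vec_def)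
  finally show ?thesis using i by simp
qed

lemma level_set_endpoints:
  assumes i: "i \<in> {1..d}" and l: "0 < l" "l \<le> min_gap d mu nu"
  shows "0 < a_end mu nu l i" and "a_end mu nu l i \<le> b_end mu nu l i"
    and "0 \<le> t \<Longrightarrow> l \<le> gain (mu i) (nu i) t \<longleftrightarrow> a_end mu nu l i \<le> t \<and> t \<le> b_end mu nu l i"
proof -
  have "l \<le> (sqrt (mu i) - sqrt (nu i))\<^sup>2" using l i by (auto simp: min_gap_def)
  note roots = gain_ge_iff_between_roots[of "nu i" "mu i" l, OF _ _ l(1) this]
  show "0 < a_end mu nu l i" "a_end mu nu l i \<le> b_end mu nu l i"
    "0 \<le> t \<Longrightarrow> l \<le> gain (mu i) (nu i) t \<longleftrightarrow> a_end mu nu l i \<le> t \<and> t \<le> b_end mu nu l i"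
    using roots nu_pos[OF i] nu_less_mu[OF i] by (simp_all add: a_end_def b_end_def)
qed

lemma gamma_hat_at_bounds:
  assumes "0 < l" "l \<le> min_gap d mu nu" and i: "i \<in> {1..d}"
  shows "a_end mu nu l i \<le> gamma_hat_at d mu nu l i" and "gamma_hat_at d mu nu l i \<le> b_end mu nu l i"
    and "gamma_hat_at d mu nu l i \<le> Max (a_end mu nu l ` {1..d})"
  using level_set_endpoints[OF i assms(1,2)] i by (auto simp: gamma_hat_at_def)

context
  fixes q :: real
  assumes q: "0 \<le> q" "q < 1"
begin

text \<open>Necessity: for \<open>l < min_gap\<close>, a point of the region with \<open>min_gain > l\<close> lies in the box
  \<open>[a_end l, b_end l]\<close>, so its clipping \<open>gamma_hat_at l\<close> has \<open>Sigma_fun < 1\<close>; let \<open>l \<rightarrow> min_gap\<close>.\<close>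
lemma Sigma_gamma_hat_le_1_if_close:
  assumes close: "\<forall>l < min_gap d mu nu. \<exists>\<gamma>\<in>Sigma_region d q. l < min_gain d mu nu \<gamma>"
  shows "Sigma_fun d q (gamma_hat d mu nu) \<le> 1"
proof -
  define m where "m = min_gap d mu nu"
  define G where "G l = Sigma_fun d q (gamma_hat_at d mu nu l)" for l
  have "G l \<le> 1" if l: "0 < l" "l < m" for l
  proof -
    obtain \<gamma> where \<gamma>: "\<gamma> \<in> Sigma_region d q" "l < min_gain d mu nu \<gamma>" using close l by (auto simp: m_def)
    have "0 < a_end mu nu l j \<and> a_end mu nu l j \<le> \<gamma> j \<and> \<gamma> j \<le> b_end mu nu l j" if j: "j \<in> {1..d}" for j
    proof -
      have "\<forall>k\<in>{1..d}. l < gain (mu k) (nu k) (\<gamma> k)" using \<gamma>(2) d by (simp add: min_gain_def)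
      with j have "l \<le> gain (mu j) (nu j) (\<gamma> j)" by (blast intro: less_imp_le)
      moreover have "0 \<le> \<gamma> j" using \<gamma>(1) j by (simp add: Sigma_region_def nonneg_vec_def)
      ultimately show ?thesis using level_set_endpoints[OF j, of l] l by (simp add: m_def)
    qed
    then have "G l \<le> Sigma_fun d q \<gamma>"
      unfolding G_def gamma_hat_at_def using q d by (intro Sigma_fun_clipped_le) auto
    also have "\<dots> < 1" using \<gamma>(1) by (simp add: Sigma_region_def)
    finally show ?thesis by simp
  qed
  hence "\<forall>\<^sub>F l in at_left m. G l \<le> 1"
    using eventually_at_left_real[OF min_gap_pos[folded m_def]] by (auto elim: eventually_mono)
  moreover have "(G \<longlongrightarrow> G m) (at_left m)"
    unfolding G_def
  proof (intro tendsto_Sigma_fun q d ballI)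
    fix i assume i: "i \<in> {1..d}"
    have "nu i \<noteq> 0" using nu_pos[OF i] by simp
    then show "((\<lambda>l. gamma_hat_at d mu nu l i) \<longlongrightarrow> gamma_hat_at d mu nu m i) (at_left m)"
      unfolding gamma_hat_at_def a_end_def b_end_def using d nu_pos
      by (intro tendsto_min tendsto_Max_image tendsto_intros ballI) (auto simp: less_imp_neq[symmetric])
    show "0 < gamma_hat_at d mu nu m i"
      using gamma_hat_at_bounds(1)[OF min_gap_pos _ i] level_set_endpoints(1)[OF i min_gap_pos]
      by (simp add: m_def)
  qed
  ultimately have "G m \<le> 1" by (intro tendsto_upperbound) auto
  then show ?thesis by (simp add: G_def m_def gamma_hat_eq_gamma_hat_at)
qed

text \<open>Sufficiency: \<open>gamma_hat\<close> itself has \<open>min_gain \<ge> min_gap\<close> but may only satisfy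
  \<open>Sigma_fun \<le> 1\<close>; raising its coordinates slightly towards the top value makes the
  inequality strict while changing \<open>min_gain\<close> arbitrarily little.\<close>
lemma close_if_Sigma_gamma_hat_le_1:
  assumes Sigma_le: "Sigma_fun d q (gamma_hat d mu nu) \<le> 1" and l: "l < min_gap d mu nu"
  shows "\<exists>\<gamma>\<in>Sigma_region d q. l < min_gain d mu nu \<gamma>"
proof -
  define m where "m = min_gap d mu nu"
  define T where "T = Max (a_end mu nu m ` {1..d})"
  define g where "g = gamma_hat d mu nu"
  define \<gamma> where "\<gamma> \<delta> k = (if k \<in> {1..d} then min (g k + \<delta>) T else 0)" for \<delta> k
  note bounds = gamma_hat_at_bounds[OF min_gap_pos order.refl, folded gamma_hat_eq_gamma_hat_at,
      folded g_def m_def, folded T_def]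
  note level = level_set_endpoints[OF _ min_gap_pos order.refl, folded m_def]
  have g_pos: "0 < g j" if "j \<in> {1..d}" for j
    using bounds(1)[OF that] level(1)[OF that] by simp
  have "T \<in> a_end mu nu m ` {1..d}" unfolding T_def using d by (intro Max_in) auto
  then obtain i where i: "i \<in> {1..d}" "a_end mu nu m i = T" by auto
  have "g i = min (b_end mu nu m i) T"
    by (simp add: g_def gamma_hat_eq_gamma_hat_at gamma_hat_at_def T_def m_def)
  with level(2)[OF i(1)] i(2) have g_top: "g i = T" by simp
  have g_T: "\<forall>j\<in>{1..d}. 0 < g j \<and> g j \<le> T" using g_pos bounds(3) by auto
  have in_region: "\<gamma> \<delta> \<in> Sigma_region d q" if "0 < \<delta>" for \<delta>
  proof -
    have raised: "Sigma_fun d q (\<gamma> \<delta>) = Sigma_fun d q (\<lambda>j. min (g j + \<delta>) T)"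
      by (rule Sigma_fun_cong) (simp add: \<gamma>_def)
    have "Sigma_fun d q (\<gamma> \<delta>) < 1"
    proof (cases "0 < Sigma_fun d q g")
      case True
      with Sigma_fun_raised_le(2)[OF q g_T i(1) g_top _ that] raised Sigma_le show ?thesis
        by (simp add: g_def less_imp_le[OF that])
    next
      case False
      with Sigma_fun_raised_le(1)[OF q g_T i(1) g_top less_imp_le[OF that]] raised show ?thesis by simp
    qed
    moreover have "0 < \<gamma> \<delta> j" if "j \<in> {1..d}" for j
      using g_pos[OF that] g_T that \<open>0 < \<delta>\<close> by (force simp: \<gamma>_def)
    ultimately show ?thesis by (auto simp: Sigma_region_def nonneg_vec_def \<gamma>_def less_imp_le)
  qed
  have "\<forall>\<^sub>F \<delta> in at_right 0. l < min_gain d mu nu (\<gamma> \<delta>)"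
  proof (rule order_tendstoD(1))
    have "m \<le> gain (mu j) (nu j) (g j)" if "j \<in> {1..d}" for j
      using level(3)[OF that] bounds(1,2)[OF that] g_pos[OF that] by simp
    with l have "\<forall>j\<in>{1..d}. l < gain (mu j) (nu j) (g j)" by (fastforce simp: m_def)
    then show "l < min_gain d mu nu g" using d by (simp add: min_gain_def)
    have "((\<lambda>\<delta>. gain (mu j) (nu j) (\<gamma> \<delta> j)) \<longlongrightarrow> gain (mu j) (nu j) (g j)) (at_right 0)"
      if j: "j \<in> {1..d}" for j
    proof -
      have "((\<lambda>\<delta>. min (g j + \<delta>) T) \<longlongrightarrow> min (g j + 0) T) (at_right 0)"
        by (intro tendsto_intros)
      hence "((\<lambda>\<delta>. \<gamma> \<delta> j) \<longlongrightarrow> g j) (at_right 0)" using j g_T by (simp add: \<gamma>_def min_absorb1)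
      then show ?thesis unfolding gain_def using g_pos[OF j] by (intro tendsto_intros) auto
    qed
    then show "((\<lambda>\<delta>. min_gain d mu nu (\<gamma> \<delta>)) \<longlongrightarrow> min_gain d mu nu g) (at_right 0)"
      unfolding min_gain_def using d by (intro tendsto_Min_image) auto
  qed
  then have "\<forall>\<^sub>F \<delta> in at_right 0. 0 < \<delta> \<and> l < min_gain d mu nu (\<gamma> \<delta>)"
    using eventually_at_right_less by (rule eventually_conj[rotated])
  with in_region show ?thesis using eventually_happens'[OF trivial_limit_at_right_real] by blast
qed

lemma Sup_min_gain_eq_min_gap_iff:
  "Sup (min_gain d mu nu ` Sigma_region d q) = min_gap d mu nu \<longleftrightarrow> Sigma_fun d q (gamma_hat d mu nu) \<le> 1"
proof -
  define one where "one k = (if k \<in> {1..d} then 1 else 0 :: real)" for k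
  have "Sigma_fun d q one = 0"
    using q d by (subst Sigma_fun_at_top[where T = 1 and i = 1]) (auto simp: one_def Sigma_term_def)
  hence "one \<in> Sigma_region d q" by (simp add: Sigma_region_def nonneg_vec_def one_def)
  moreover have "\<forall>x\<in>min_gain d mu nu ` Sigma_region d q. x \<le> min_gap d mu nu"
    using min_gain_le_min_gap by (auto simp: Sigma_region_def)
  ultimately show ?thesis
    using cSup_eq_iff_arbitrarily_close[of "min_gain d mu nu ` Sigma_region d q"]
      Sigma_gamma_hat_le_1_if_close close_if_Sigma_gamma_hat_le_1 by blast
qed

end

end

theorem proposition3p4:
  fixes d :: nat and lam mu nu :: "nat \<Rightarrow> real" and P :: "nat \<Rightarrow> nat \<Rightarrow> real" and p :: real
  assumes d: "d \<ge> 2"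
    and lam_nonneg: "\<forall>i\<in>{1..d}. lam i \<ge> 0"
    and mu_pos: "\<forall>i\<in>{1..d}. mu i > 0"
    and P_nonneg: "\<forall>i\<in>{1..d}. \<forall>j\<in>{1..d}. P i j \<ge> 0"
    and P_diag: "\<forall>i\<in>{1..d}. P i i = 0"
    and P_sub: "\<forall>i\<in>{1..d}. (\<Sum>j=1..d. P i j) \<le> 1"
    and hypA: "kernel_irreducible d lam mu P"
    and traffic: "\<forall>j\<in>{1..d}. nu j = lam j + (\<Sum>i=1..d. nu i * P i j)"
    and hypB: "\<forall>i\<in>{1..d}. nu i < mu i"
    and P_const: "\<forall>i\<in>{1..d}. \<forall>j\<in>{1..d}. i \<noteq> j \<longrightarrow> P i j = p"
    and p_bound: "p < 1 / (real d - 1)"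
  defines "q \<equiv> p / (1 - (real d - 2) * p)"
  shows "Sup ((\<lambda>\<gamma>. Min ((\<lambda>i. \<gamma> i * (mu i / (1 + \<gamma> i) - nu i)) ` {1..d})) ` Gamma_set d P) = min_gap d mu nu
         \<longleftrightarrow> Sigma_fun d q (gamma_hat d mu nu) \<le> 1"
proof -
  have "(1::nat) \<in> {1..d}" "(2::nat) \<in> {1..d}" "(1::nat) \<noteq> 2" using d by auto
  with P_nonneg P_const have "0 \<le> P 1 2" "P 1 2 = p" by blast+
  hence "0 \<le> p" by simp
  moreover have "(real d - 1) * p < 1" using p_bound d by (simp add: field_simps)
  ultimately have p: "0 \<le> p" "(real d - 2) * p < 1" "(real d - 1) * p < 1" by (smt (verit) mult_right_mono)+
  then have q: "0 \<le> q" "q < 1" by (simp_all add: q_def field_simps)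
  have region: "Gamma_set d P = Sigma_region d q"
    using d q visit_prob_symmetric[OF P_diag P_const p(1,2)] by (intro Gamma_set_eq_Sigma_region) (simp_all add: q_def)
  have nu_pos: "\<And>i. i \<in> {1..d} \<Longrightarrow> 0 < nu i"
    using traffic_solution_pos[OF lam_nonneg P_diag P_const p(1,3) hypA traffic] .
  have gain_form: "(\<lambda>\<gamma>. Min ((\<lambda>i. \<gamma> i * (mu i / (1 + \<gamma> i) - nu i)) ` {1..d})) = min_gain d mu nu"
    by (simp add: fun_eq_iff min_gain_def gain_def)
  have "1 \<le> d" "\<And>i. i \<in> {1..d} \<Longrightarrow> nu i < mu i" using d hypB by auto
  from Sup_min_gain_eq_min_gap_iff[OF this(1) nu_pos this(2) q] show ?thesis
    unfolding gain_form region .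
qed

end
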